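(* Let $n,p\ge 1$, let $\tau\in[0,1]$, let $\eta\ge\varepsilon>0$, and let $(Q^\ast,Y^\ast,Z^\ast)$ be an optimal solution of the learner semidefinite program described in the context (for this $\eta$, $\varepsilon$, $\tau$). Fix an index $j\in\{1,\dots,2^p\}$ and, for $(A,B)\in\mathbb{R}^{n\times n}\times\mathbb{R}^{n\times p}$, let $$\Xi(A,B)=\begin{bmatrix}\tau Q^\ast & 0 & M(A,B)^\top\\ 0 & (1-\tau)I & 0\\ M(A,B) & 0 & Q^\ast\end{bmatrix},\qquad M(A,B)=AQ^\ast+BE_jY^\ast+BE_j^-Z^\ast .$$ Then there exists a constant $\ell=\ell(\varepsilon)\ge 0$ such that $$\bigl|\lambda_{\min}(\Xi(A,B))-\lambda_{\min}(\Xi(A+\Delta A,B+\Delta B))\bigr|\le \ell\bigl(\|\Delta A\|_{\mathrm{op}}+\|\Delta B\|_{\mathrm{op}}\bigr)$$ for every $(A,B)\in\Omega$ and every perturbation $(\Delta A,\Delta B)\in\mathbb{R}^{n\times n}\times\mathbb{R}^{n\times p}$.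
   Context: Consider the discrete-time control-affine system $x(t+1)=f(x(t))+g(x(t),\phi(t))u(t)$ with $x\in\mathscr D=\{x\in\mathbb{R}^n: Lx\le \mathbf 1_\ell\}$ ($L\in\mathbb{R}^{\ell\times n}$, $\mathrm{rank}(L)=\ell$, rows $l_i$), $u\in\mathscr U=\{u\in\mathbb{R}^p:|u|\le\bar u\}$ componentwise ($\bar u\in\mathbb{R}^p_+$), $f:\mathbb{R}^n\to\mathbb{R}^n$ and $g:\mathbb{R}^n\times[0,1]^p\to\mathbb{R}^{n\times p}$ of class $C^2$, and fault parameter $\phi\in\Phi=\{\phi\in[0,1]^p:\sum_{i=1}^p\mathds 1(\phi_i=1)\ge p-1\}$. $\Omega$ is the set of pairs $(A,B)$ with $A=\frac{df}{dx}(\bar x)$ and $B=g(\bar x,\bar\phi)$ for some $\bar x\in\mathscr D$, $\bar\phi\in\Phi$; $\Omega$ is assumed bounded (it is compact and connected). $\{E_j\}_{j=1}^{2^p}$ are all $p\times p$ diagonal matrices with entries in $\{0,1\}$, and $E_j^-=I-E_j$. $\|\cdot\|_{\mathrm{op}}$ is the operator norm induced by the Euclidean norm and $\lambda_{\min}$ the smallest eigenvalue of a symmetric matrix. The identity block $(1-\tau)I$ has a fixed dimension. Learner program: given finitely many pairs $(A_i,B_i)\in\Omega$, $i=1,\dots,V$ (the vertices of the convex hull of a finite sample set in $\Omega$), maximize $\mathrm{trace}(Q)$ over symmetric $Q\in\mathbb{R}^{n\times n}$, $Y,Z\in\mathbb{R}^{p\times n}$ subject to: $\begin{bmatrix}\tau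 Q & 0 & (A_iQ+B_iE_jY+B_iE_j^-Z)^\top\\ 0&(1-\tau)I&0\\ A_iQ+B_iE_jY+B_iE_j^-Z&0&Q\end{bmatrix}\succeq\varepsilon I$ for all $i=1,\dots,V$, $j=1,\dots,2^p$; $\begin{bmatrix}1& l_iQ\\ Ql_i^\top & Q\end{bmatrix}\succeq0$ for $i=1,\dots,\ell$; $\begin{bmatrix}\bar u_i^2 & z_i\\ z_i^\top & Q\end{bmatrix}\succeq 0$ for $i=1,\dots,p$, where $z_i$ is the $i$-th row of $Z$; $Q\preceq\eta I$; $Y\in\mathcal Y$, $Z\in\mathcal Z$, where $\mathcal Y,\mathcal Z\subset\mathbb{R}^{p\times n}$ are given nonempty, convex, compact sets. *)

theory Defs
  imports "HOL-Analysis.Analysis"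
begin

definition C1_on :: "'a::real_normed_vector set \<Rightarrow> ('a \<Rightarrow> 'b::real_normed_vector) \<Rightarrow> bool" where
  "C1_on U h \<longleftrightarrow> (\<exists>h'. (\<forall>x\<in>U. (h has_derivative blinfun_apply (h' x)) (at x)) \<and> continuous_on U h')"

definition C2_on :: "'a::real_normed_vector set \<Rightarrow> ('a \<Rightarrow> 'b::real_normed_vector) \<Rightarrow> bool" where
  "C2_on U h \<longleftrightarrow> (\<exists>h'. (\<forall>x\<in>U. (h has_derivative blinfun_apply (h' x)) (at x)) \<and> C1_on U h')"

definition psd :: "real^'k^'k \<Rightarrow> bool" where
  "psd X \<longleftrightarrow> (\<forall>v. 0 \<le> v \<bullet> (X *v v))"

text \<open>Smallest eigenvalue (used for symmetric matrices, whose eigenvalues are real).\<close>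
definition lambda_min :: "real^'k^'k \<Rightarrow> real" where
  "lambda_min X = Min {e. \<exists>v. v \<noteq> 0 \<and> X *v v = e *\<^sub>R v}"

definition opnorm :: "real^'c^'r \<Rightarrow> real" where
  "opnorm M = onorm (\<lambda>v. M *v v)"

text \<open>3x3 block matrix [[P,0,M^T],[0,R,0],[M,0,S]].\<close>
definition blk3 :: "real^'n^'n \<Rightarrow> real^'m^'m \<Rightarrow> real^'n^'n \<Rightarrow> real^'n^'n
    \<Rightarrow> real^(('n + 'm) + 'n)^(('n + 'm) + 'n)" where
  "blk3 P R M S = (\<chi> r c. case r of
      Inl (Inl i) \<Rightarrow> (case c of Inl (Inl k) \<Rightarrow> P$i$k | Inl (Inr k) \<Rightarrow> 0 | Inr k \<Rightarrow> M$k$i)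
    | Inl (Inr i) \<Rightarrow> (case c of Inl (Inl k) \<Rightarrow> 0 | Inl (Inr k) \<Rightarrow> R$i$k | Inr k \<Rightarrow> 0)
    | Inr i \<Rightarrow> (case c of Inl (Inl k) \<Rightarrow> M$i$k | Inl (Inr k) \<Rightarrow> 0 | Inr k \<Rightarrow> S$i$k))"

text \<open>2x2 block matrix [[c, w],[u, S]] with scalar c, row w, column u.\<close>
definition blk2 :: "real \<Rightarrow> real^'n \<Rightarrow> real^'n \<Rightarrow> real^'n^'n \<Rightarrow> real^(unit + 'n)^(unit + 'n)" where
  "blk2 c w u S = (\<chi> r s. case r of
      Inl _ \<Rightarrow> (case s of Inl _ \<Rightarrow> c | Inr k \<Rightarrow> w$k)
    | Inr i \<Rightarrow> (case s of Inl _ \<Rightarrow> u$i | Inr k \<Rightarrow> S$i$k))"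

text \<open>The set of all diagonal p x p matrices with entries in {0,1} (the E_j).\<close>
definition diag01 :: "(real^'p^'p) set" where
  "diag01 = {E. \<forall>i k. (i \<noteq> k \<longrightarrow> E$i$k = 0) \<and> (E$i$i = 0 \<or> E$i$i = 1)}"

definition Phi_set :: "(real^'p) set" where
  "Phi_set = {\<phi>. (\<forall>i. 0 \<le> \<phi>$i \<and> \<phi>$i \<le> 1) \<and> card {i. \<phi>$i = 1} \<ge> CARD('p) - 1}"

definition Dset :: "real^'n^'k \<Rightarrow> (real^'n) set" where
  "Dset L = {x. \<forall>i. (L *v x)$i \<le> 1}"

definition Omega :: "(real^'n \<Rightarrow> real^'n) \<Rightarrow> ((real^'n) \<times> (real^'p) \<Rightarrow> real^'p^'n) \<Rightarrow> real^'n^'k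
    \<Rightarrow> ((real^'n^'n) \<times> (real^'p^'n)) set" where
  "Omega f g L = {(jacobian f (at x), g (x, \<phi>)) | x \<phi>. x \<in> Dset L \<and> \<phi> \<in> Phi_set}"

definition learner_feasible ::
  "real \<Rightarrow> real \<Rightarrow> real \<Rightarrow> 'm::finite itself \<Rightarrow> ((real^'n^'n) \<times> (real^'p^'n)) set \<Rightarrow> real^'n^'k \<Rightarrow> real^'p
   \<Rightarrow> (real^'n^'p) set \<Rightarrow> (real^'n^'p) set \<Rightarrow> real^'n^'n \<Rightarrow> real^'n^'p \<Rightarrow> real^'n^'p \<Rightarrow> bool" where
  "learner_feasible \<tau> \<epsilon> \<eta> (_::'m::finite itself) VS L ubar Ys Zs Q Y Z \<longleftrightarrow>
     transpose Q = Q \<and>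
     (\<forall>(A,B)\<in>VS. \<forall>E\<in>diag01.
        psd (blk3 (\<tau> *\<^sub>R Q) ((1 - \<tau>) *\<^sub>R (mat 1 :: real^'m^'m))
                  (A ** Q + B ** E ** Y + B ** (mat 1 - E) ** Z) Q - \<epsilon> *\<^sub>R mat 1)) \<and>
     (\<forall>i. psd (blk2 1 ((L$i) v* Q) (Q *v (L$i)) Q)) \<and>
     (\<forall>i. psd (blk2 ((ubar$i)\<^sup>2) (Z$i) (Z$i) Q)) \<and>
     psd (\<eta> *\<^sub>R mat 1 - Q) \<and>
     Y \<in> Ys \<and> Z \<in> Zs"

definition learner_optimal ::
  "real \<Rightarrow> real \<Rightarrow> real \<Rightarrow> 'm::finite itself \<Rightarrow> ((real^'n^'n) \<times> (real^'p^'n)) set \<Rightarrow> real^'n^'k \<Rightarrow> real^'p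
   \<Rightarrow> (real^'n^'p) set \<Rightarrow> (real^'n^'p) set \<Rightarrow> real^'n^'n \<Rightarrow> real^'n^'p \<Rightarrow> real^'n^'p \<Rightarrow> bool" where
  "learner_optimal \<tau> \<epsilon> \<eta> m VS L ubar Ys Zs Q Y Z \<longleftrightarrow>
     learner_feasible \<tau> \<epsilon> \<eta> m VS L ubar Ys Zs Q Y Z \<and>
     (\<forall>Q' Y' Z'. learner_feasible \<tau> \<epsilon> \<eta> m VS L ubar Ys Zs Q' Y' Z' \<longrightarrow> trace Q' \<le> trace Q)"

end

theory Submission
  imports Defs
begin

(*
  Of the blocks of \<Xi>(A,B) only the off-diagonal one, M = A Q + B K with
  K = E Y + (I - E) Z, depends on (A,B). Since \<lambda>_min of a symmetric matrix is the
  minimum of its quadratic form over the unit sphere, two symmetric matrices whose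
  quadratic forms differ by at most d there have \<lambda>_min differing by at most d.
  For \<Xi> the difference of the forms at v = (a,b,c) is 2 c \<bullet> (\<Delta>M a), and
  2 |a| |c| \<le> |a|\<^sup>2 + |c|\<^sup>2 \<le> 1, so \<lambda>_min is 1-Lipschitz in M for the operator norm.
  As \<Delta>M = \<Delta>A Q + \<Delta>B K, the constant l = |Q| + |K| works for every (A,B), not only
  on \<Omega>; of the hypotheses, only the symmetry of Q (a constraint of the program) is used.
*)

lemma inner_matrix_vector_symmetric:
  fixes X :: "real^'k^'k"
  assumes "transpose X = X"
  shows "v \<bullet> (X *v w) = (X *v v) \<bullet> w"
  by (metis assms dot_lmul_matrix transpose_matrix_vector)

lemma transpose_diff: "transpose (A - B) = transpose A - transpose B"
  by (simp add: transpose_def vec_eq_iff)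

lemma psd_quadratic_form_eq_0_imp:
  fixes P :: "real^'k^'k"
  assumes sym: "transpose P = P" and "psd P" and zero: "v \<bullet> (P *v v) = 0"
  shows "P *v v = 0"
proof (rule ccontr)
  assume "P *v v \<noteq> 0"
  define w where "w = P *v v"
  define q where "q = w \<bullet> w"
  define k where "k = w \<bullet> (P *v w)"
  define s where "s = q / (k + 1)"
  \<comment> \<open>the form at \<open>v - s w\<close> is \<open>s (s k - 2 q)\<close>, negative for this small \<open>s > 0\<close>\<close>
  have "q > 0" using \<open>P *v v \<noteq> 0\<close> unfolding q_def w_def by simp
  have "k \<ge> 0" using \<open>psd P\<close> unfolding k_def psd_def by simp
  have "s > 0" using \<open>q > 0\<close> \<open>k \<ge> 0\<close> unfolding s_def by simp
  have "0 \<le> (v - s *\<^sub>R w) \<bullet> (P *v (v - s *\<^sub>R w))"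
    using \<open>psd P\<close> unfolding psd_def by simp
  also have "\<dots> = s * (s * k - 2 * q)"
    using inner_matrix_vector_symmetric[OF sym, of v w] zero
    by (simp add: matrix_vector_mult_diff_distrib matrix_vector_mult_scaleR inner_diff_left
        inner_diff_right algebra_simps q_def k_def w_def inner_commute)
  finally have "2 * q \<le> s * k" using \<open>s > 0\<close> by (simp add: zero_le_mult_iff)
  moreover have "s * k < q"
  proof -
    have "s * k = q * (k / (k + 1))" unfolding s_def by simp
    also have "\<dots> < q" using \<open>q > 0\<close> \<open>k \<ge> 0\<close> by (simp add: pos_divide_less_eq algebra_simps)
    finally show ?thesis .
  qed
  ultimately show False using \<open>q > 0\<close> by linarith
qed

lemma finite_eigenvalues_symmetric:
  fixes X :: "real^'k^'k"
  assumes sym: "transpose X = X"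
  shows "finite {e. \<exists>v. v \<noteq> 0 \<and> X *v v = e *\<^sub>R v}" (is "finite ?E")
proof -
  have "\<exists>ev. \<forall>e\<in>?E. ev e \<noteq> 0 \<and> X *v ev e = e *\<^sub>R ev e"
    by (rule bchoice[of ?E "\<lambda>e v. v \<noteq> 0 \<and> X *v v = e *\<^sub>R v"]) blast
  then obtain ev where "\<forall>e\<in>?E. ev e \<noteq> 0 \<and> X *v ev e = e *\<^sub>R ev e"
    by blast
  then have ev: "ev e \<noteq> 0 \<and> X *v ev e = e *\<^sub>R ev e" if "e \<in> ?E" for e
    using that by blast
  have inj: "inj_on ev ?E"
  proof (rule inj_onI)
    fix a b assume a: "a \<in> ?E" and b: "b \<in> ?E" and "ev a = ev b"
    have "a *\<^sub>R ev a = X *v ev a" using ev[OF a] by simp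
    also have "\<dots> = b *\<^sub>R ev a" using ev[OF b] \<open>ev a = ev b\<close> by simp
    finally have "a *\<^sub>R ev a = b *\<^sub>R ev a" .
    then show "a = b" using ev[OF a] by simp
  qed
  have "pairwise orthogonal (ev ` ?E)"
  proof (rule pairwise_imageI)
    fix a b assume a: "a \<in> ?E" and b: "b \<in> ?E" and "a \<noteq> b"
    have "b * (ev a \<bullet> ev b) = a * (ev a \<bullet> ev b)"
      using inner_matrix_vector_symmetric[OF sym, of "ev a" "ev b"] ev[OF a] ev[OF b] by simp
    with \<open>a \<noteq> b\<close> show "orthogonal (ev a) (ev b)" by (simp add: orthogonal_def)
  qed
  moreover have "0 \<notin> ev ` ?E" using ev by fastforce
  ultimately have "independent (ev ` ?E)" by (rule pairwise_orthogonal_independent)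
  then have "finite (ev ` ?E)" by (rule independent_imp_finite)
  then show ?thesis using inj by (rule finite_imageD)
qed

lemma quadratic_form_attains_min_on_sphere:
  fixes X :: "real^'k^'k"
  obtains v0 where "norm v0 = 1" and "\<And>v. norm v = 1 \<Longrightarrow> v0 \<bullet> (X *v v0) \<le> v \<bullet> (X *v v)"
proof -
  have "\<exists>x\<in>sphere 0 1. \<forall>y\<in>sphere 0 1. x \<bullet> (X *v x) \<le> y \<bullet> (X *v y)"
  proof (rule continuous_attains_inf)
    show "sphere (0::real^'k) 1 \<noteq> {}"
      using vector_choose_size[of 1] by auto
    show "continuous_on (sphere 0 1) (\<lambda>x. x \<bullet> (X *v x))"
      by (intro continuous_intros linear_continuous_on bounded_linear.linear
          matrix_vector_mul_bounded_linear)
  qed simp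
  then show ?thesis using that by auto
qed

lemma quadratic_form_ge_mult_norm_sq:
  fixes X :: "real^'k^'k"
  assumes "\<And>u. norm u = 1 \<Longrightarrow> m \<le> u \<bullet> (X *v u)"
  shows "m * (norm w)\<^sup>2 \<le> w \<bullet> (X *v w)"
proof (cases "w = 0")
  case False
  define u where "u = w /\<^sub>R norm w"
  have "norm u = 1" using False unfolding u_def by simp
  then have "m \<le> u \<bullet> (X *v u)" by (rule assms)
  also have "u \<bullet> (X *v u) = (w \<bullet> (X *v w)) / (norm w)\<^sup>2"
    using False unfolding u_def by (simp add: matrix_vector_mult_scaleR field_simps power2_eq_square)
  finally show ?thesis using False by (simp add: field_simps)
qed simp

lemma Rayleigh_minimizer_eigenvector:
  fixes X :: "real^'k^'k"
  assumes sym: "transpose X = X" and "norm v0 = 1"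
    and min: "\<And>v. norm v = 1 \<Longrightarrow> v0 \<bullet> (X *v v0) \<le> v \<bullet> (X *v v)"
  shows "X *v v0 = (v0 \<bullet> (X *v v0)) *\<^sub>R v0"
proof -
  define m where "m = v0 \<bullet> (X *v v0)"
  define P where "P = X - m *\<^sub>R mat 1"
  have Pv: "P *v w = X *v w - m *\<^sub>R w" for w
    unfolding P_def by (simp add: matrix_vector_mult_diff_rdistrib scaleR_matrix_vector_assoc[symmetric])
  have "transpose P = P"
    unfolding P_def using sym by (simp add: transpose_diff transpose_scalar)
  moreover have "psd P"
    using quadratic_form_ge_mult_norm_sq[of m X] min
    by (simp add: psd_def Pv inner_diff_right dot_square_norm m_def)
  moreover have "v0 \<bullet> (P *v v0) = 0"
    using \<open>norm v0 = 1\<close> by (simp add: Pv inner_diff_right dot_square_norm m_def)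
  ultimately have "P *v v0 = 0" by (rule psd_quadratic_form_eq_0_imp)
  then show ?thesis by (simp add: Pv m_def)
qed

lemma lambda_min_eq_Rayleigh_min:
  fixes X :: "real^'k^'k"
  assumes sym: "transpose X = X" and "norm v0 = 1"
    and min: "\<And>v. norm v = 1 \<Longrightarrow> v0 \<bullet> (X *v v0) \<le> v \<bullet> (X *v v)"
  shows "lambda_min X = v0 \<bullet> (X *v v0)"
  unfolding lambda_min_def
proof (rule Min_eqI[OF finite_eigenvalues_symmetric[OF sym]])
  have "X *v v0 = (v0 \<bullet> (X *v v0)) *\<^sub>R v0"
    by (rule Rayleigh_minimizer_eigenvector[OF sym \<open>norm v0 = 1\<close>]) (rule min)
  moreover have "v0 \<noteq> 0" using \<open>norm v0 = 1\<close> by auto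
  ultimately show "v0 \<bullet> (X *v v0) \<in> {e. \<exists>v. v \<noteq> 0 \<and> X *v v = e *\<^sub>R v}" by blast
next
  fix e assume "e \<in> {e. \<exists>v. v \<noteq> 0 \<and> X *v v = e *\<^sub>R v}"
  then obtain v where "v \<noteq> 0" and "X *v v = e *\<^sub>R v" by blast
  then have "(v0 \<bullet> (X *v v0)) * (norm v)\<^sup>2 \<le> e * (norm v)\<^sup>2"
    using quadratic_form_ge_mult_norm_sq[of "v0 \<bullet> (X *v v0)" X v] min by (simp add: dot_square_norm)
  with \<open>v \<noteq> 0\<close> show "v0 \<bullet> (X *v v0) \<le> e" by simp
qed

lemma lambda_min_diff_le:
  fixes X1 X2 :: "real^'k^'k"
  assumes sym1: "transpose X1 = X1" and sym2: "transpose X2 = X2"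
    and d: "\<And>v. norm v = 1 \<Longrightarrow> \<bar>v \<bullet> (X1 *v v) - v \<bullet> (X2 *v v)\<bar> \<le> d"
  shows "\<bar>lambda_min X1 - lambda_min X2\<bar> \<le> d"
proof -
  obtain v1 where v1: "norm v1 = 1" "\<And>v. norm v = 1 \<Longrightarrow> v1 \<bullet> (X1 *v v1) \<le> v \<bullet> (X1 *v v)"
    using quadratic_form_attains_min_on_sphere[of X1] by blast
  obtain v2 where v2: "norm v2 = 1" "\<And>v. norm v = 1 \<Longrightarrow> v2 \<bullet> (X2 *v v2) \<le> v \<bullet> (X2 *v v)"
    using quadratic_form_attains_min_on_sphere[of X2] by blast
  have "lambda_min X1 = v1 \<bullet> (X1 *v v1)" "lambda_min X2 = v2 \<bullet> (X2 *v v2)"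
    using lambda_min_eq_Rayleigh_min sym1 sym2 v1 v2 by blast+
  moreover have "v1 \<bullet> (X1 *v v1) \<le> v2 \<bullet> (X1 *v v2)" "v2 \<bullet> (X2 *v v2) \<le> v1 \<bullet> (X2 *v v1)"
    using v1 v2 by blast+
  ultimately show ?thesis using d[OF v1(1)] d[OF v2(1)] by linarith
qed

lemma sum_UNIV_Plus:
  fixes f :: "('a::finite + 'b::finite) \<Rightarrow> 'c::comm_monoid_add"
  shows "sum f UNIV = sum (\<lambda>i. f (Inl i)) UNIV + sum (\<lambda>i. f (Inr i)) UNIV"
proof -
  have "sum f UNIV = sum f (UNIV <+> UNIV)" by simp
  also have "\<dots> = sum (f \<circ> Inl) UNIV + sum (f \<circ> Inr) UNIV" by (rule sum.Plus) auto
  finally show ?thesis by (simp add: comp_def)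
qed

lemma blk3_quadratic_form:
  fixes v :: "real^(('n::finite + 'm::finite) + 'n)"
  defines "a \<equiv> \<chi> i. v $ Inl (Inl i)" and "b \<equiv> \<chi> i. v $ Inl (Inr i)" and "c \<equiv> \<chi> i. v $ Inr i"
  shows "v \<bullet> (blk3 P R M S *v v) = a \<bullet> (P *v a) + b \<bullet> (R *v b) + 2 * (c \<bullet> (M *v a)) + c \<bullet> (S *v c)"
    and "(norm v)\<^sup>2 = (norm a)\<^sup>2 + (norm b)\<^sup>2 + (norm c)\<^sup>2"
proof -
  have "(blk3 P R M S *v v) $ Inl (Inl i) = (P *v a) $ i + (transpose M *v c) $ i"
    and "(blk3 P R M S *v v) $ Inl (Inr j) = (R *v b) $ j"
    and "(blk3 P R M S *v v) $ Inr i = (M *v a) $ i + (S *v c) $ i" for i j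
    unfolding matrix_vector_mult_def a_def b_def c_def blk3_def transpose_def
    by (simp_all add: sum_UNIV_Plus)
  moreover have "v $ Inl (Inl i) = a $ i" "v $ Inl (Inr j) = b $ j" "v $ Inr i = c $ i" for i j
    by (simp_all add: a_def b_def c_def)
  ultimately have "v \<bullet> (blk3 P R M S *v v)
      = a \<bullet> (P *v a + transpose M *v c) + b \<bullet> (R *v b) + c \<bullet> (M *v a + S *v c)"
    unfolding inner_vec_def by (simp add: sum_UNIV_Plus)
  then have "v \<bullet> (blk3 P R M S *v v)
      = a \<bullet> (P *v a) + a \<bullet> (transpose M *v c) + b \<bullet> (R *v b) + c \<bullet> (M *v a) + c \<bullet> (S *v c)"
    by (simp add: inner_add_right)
  moreover have "a \<bullet> (transpose M *v c) = c \<bullet> (M *v a)"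
    by (metis dot_lmul_matrix inner_commute transpose_matrix_vector)
  ultimately show "v \<bullet> (blk3 P R M S *v v) = a \<bullet> (P *v a) + b \<bullet> (R *v b) + 2 * (c \<bullet> (M *v a)) + c \<bullet> (S *v c)"
    by simp
  show "(norm v)\<^sup>2 = (norm a)\<^sup>2 + (norm b)\<^sup>2 + (norm c)\<^sup>2"
    unfolding power2_norm_eq_inner inner_vec_def a_def b_def c_def
    by (simp add: sum_UNIV_Plus)
qed

lemma transpose_blk3:
  "transpose (blk3 P R M S) = blk3 (transpose P) (transpose R) M (transpose S)"
  by (simp add: vec_eq_iff transpose_def blk3_def split: sum.split)

lemma matrix_add_rdistrib: "(A + B) ** C = A ** C + B ** C"
  by (simp add: matrix_matrix_mult_def vec_eq_iff sum.distrib algebra_simps)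

lemma norm_matrix_vector_le_opnorm: "norm (M *v x) \<le> opnorm M * norm x"
  unfolding opnorm_def by (rule onorm[OF matrix_vector_mul_bounded_linear])

lemma opnorm_nonneg: "0 \<le> opnorm M"
  unfolding opnorm_def by (rule onorm_pos_le[OF matrix_vector_mul_bounded_linear])

lemma opnorm_add_le: "opnorm (M + N) \<le> opnorm M + opnorm N"
  unfolding opnorm_def matrix_vector_mult_add_rdistrib
  by (intro onorm_triangle matrix_vector_mul_bounded_linear)

lemma opnorm_matrix_mult_le: "opnorm (M ** N) \<le> opnorm M * opnorm N"
  using onorm_compose[OF matrix_vector_mul_bounded_linear matrix_vector_mul_bounded_linear, of M N]
  by (simp add: opnorm_def comp_def matrix_vector_mul_assoc)

lemma opnorm_add_mult_le:
  "opnorm (dA ** Q + dB ** K) \<le> (opnorm Q + opnorm K) * (opnorm dA + opnorm dB)"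
proof -
  have "opnorm (dA ** Q + dB ** K) \<le> opnorm dA * opnorm Q + opnorm dB * opnorm K"
    using opnorm_add_le[of "dA ** Q" "dB ** K"] opnorm_matrix_mult_le[of dA Q]
      opnorm_matrix_mult_le[of dB K] by linarith
  also have "\<dots> \<le> (opnorm Q + opnorm K) * (opnorm dA + opnorm dB)"
    using mult_nonneg_nonneg[OF opnorm_nonneg[of dA] opnorm_nonneg[of K]]
      mult_nonneg_nonneg[OF opnorm_nonneg[of dB] opnorm_nonneg[of Q]]
    by (simp add: algebra_simps)
  finally show ?thesis .
qed

lemma lambda_min_blk3_Lipschitz_offdiag:
  fixes P S :: "real^'n^'n" and R :: "real^'m^'m"
  assumes "transpose P = P" "transpose R = R" "transpose S = S"
  shows "\<bar>lambda_min (blk3 P R M S) - lambda_min (blk3 P R M' S)\<bar> \<le> opnorm (M' - M)"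
proof (rule lambda_min_diff_le)
  show "transpose (blk3 P R M S) = blk3 P R M S" "transpose (blk3 P R M' S) = blk3 P R M' S"
    using assms by (simp_all add: transpose_blk3)
next
  fix v :: "real^(('n + 'm) + 'n)"
  assume "norm v = 1"
  define a :: "real^'n" where "a = (\<chi> i. v $ Inl (Inl i))"
  define b :: "real^'m" where "b = (\<chi> i. v $ Inl (Inr i))"
  define c :: "real^'n" where "c = (\<chi> i. v $ Inr i)"
  have "v \<bullet> (blk3 P R M S *v v) - v \<bullet> (blk3 P R M' S *v v) = - 2 * (c \<bullet> ((M' - M) *v a))"
    unfolding blk3_quadratic_form a_def b_def c_def
    by (simp add: matrix_vector_mult_diff_rdistrib inner_diff_right)
  moreover have "2 * \<bar>c \<bullet> ((M' - M) *v a)\<bar> \<le> opnorm (M' - M) * (2 * norm a * norm c)"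
    using Cauchy_Schwarz_ineq2[of c "(M' - M) *v a"]
      mult_left_mono[OF norm_matrix_vector_le_opnorm[of "M' - M" a], of "norm c"]
    by (simp add: algebra_simps)
  moreover have "2 * norm a * norm c \<le> 1"
  proof -
    have "(norm a)\<^sup>2 + (norm b)\<^sup>2 + (norm c)\<^sup>2 = 1"
      using blk3_quadratic_form(2)[of v] \<open>norm v = 1\<close> unfolding a_def b_def c_def by simp
    then show ?thesis
      using sum_squares_bound[of "norm a" "norm c"] zero_le_power2[of "norm b"] by linarith
  qed
  ultimately show "\<bar>v \<bullet> (blk3 P R M S *v v) - v \<bullet> (blk3 P R M' S *v v)\<bar> \<le> opnorm (M' - M)"
    using mult_left_mono[of "2 * norm a * norm c" 1 "opnorm (M' - M)"] opnorm_nonneg[of "M' - M"]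
    by simp
qed

theorem theorem1:
  fixes f :: "real^'n \<Rightarrow> real^'n"
    and g :: "(real^'n) \<times> (real^'p) \<Rightarrow> real^'p^'n"
    and L :: "real^'n^'k"
    and ubar :: "real^'p"
    and S :: "((real^'n^'n) \<times> (real^'p^'n)) set"
    and Ys Zs :: "(real^'n^'p) set"
    and \<tau> \<epsilon> \<eta> :: real
    and Q :: "real^'n^'n" and Y Z :: "real^'n^'p"
    and E :: "real^'p^'p"
  assumes f_C2: "C2_on UNIV f"
    and g_C2: "\<exists>U. open U \<and> UNIV \<times> {\<phi>. \<forall>i. 0 \<le> \<phi>$i \<and> \<phi>$i \<le> 1} \<subseteq> U \<and> C2_on U g"
    and L_rank: "rank L = CARD('k)"
    and ubar_nonneg: "\<forall>i. 0 \<le> ubar$i"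
    and Omega_bdd: "bounded (Omega f g L)"
    and S_fin: "finite S" and S_sub: "S \<subseteq> Omega f g L"
    and Ys: "Ys \<noteq> {}" "convex Ys" "compact Ys"
    and Zs: "Zs \<noteq> {}" "convex Zs" "compact Zs"
    and tau: "0 \<le> \<tau>" "\<tau> \<le> 1"
    and eps: "0 < \<epsilon>" "\<epsilon> \<le> \<eta>"
    and opt: "learner_optimal \<tau> \<epsilon> \<eta> TYPE('m) {v. v extreme_point_of (convex hull S)}
                L ubar Ys Zs Q Y Z"
    and E: "E \<in> diag01"
  shows "\<exists>l\<ge>0. \<forall>(A, B)\<in>Omega f g L. \<forall>dA dB.
     \<bar>lambda_min (blk3 (\<tau> *\<^sub>R Q) ((1 - \<tau>) *\<^sub>R (mat 1 :: real^'m^'m))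
                        (A ** Q + B ** E ** Y + B ** (mat 1 - E) ** Z) Q)
      - lambda_min (blk3 (\<tau> *\<^sub>R Q) ((1 - \<tau>) *\<^sub>R (mat 1 :: real^'m^'m))
                        ((A + dA) ** Q + (B + dB) ** E ** Y + (B + dB) ** (mat 1 - E) ** Z) Q)\<bar>
     \<le> l * (opnorm dA + opnorm dB)"
proof -
  have Q_sym: "transpose Q = Q"
    using opt unfolding learner_optimal_def learner_feasible_def by blast
  have symmetric_blocks: "transpose (\<tau> *\<^sub>R Q) = \<tau> *\<^sub>R Q"
    "transpose ((1 - \<tau>) *\<^sub>R (mat 1 :: real^'m^'m)) = (1 - \<tau>) *\<^sub>R mat 1"
    by (simp_all add: Q_sym transpose_scalar)
  define K where "K = E ** Y + (mat 1 - E) ** Z"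
  define l where "l = opnorm Q + opnorm K"
  have Lipschitz_in_closed_loop: "\<bar>lambda_min (blk3 (\<tau> *\<^sub>R Q) ((1 - \<tau>) *\<^sub>R (mat 1 :: real^'m^'m))
                        (A ** Q + B ** E ** Y + B ** (mat 1 - E) ** Z) Q)
      - lambda_min (blk3 (\<tau> *\<^sub>R Q) ((1 - \<tau>) *\<^sub>R (mat 1 :: real^'m^'m))
                        ((A + dA) ** Q + (B + dB) ** E ** Y + (B + dB) ** (mat 1 - E) ** Z) Q)\<bar>
     \<le> opnorm (dA ** Q + dB ** K)" for A B dA dB
    unfolding K_def
    by (rule lambda_min_blk3_Lipschitz_offdiag[OF symmetric_blocks Q_sym, THEN order_trans])
      (simp add: matrix_add_rdistrib matrix_add_ldistrib matrix_mul_assoc algebra_simps)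
  have perturbation_bound: "opnorm (dA ** Q + dB ** K) \<le> l * (opnorm dA + opnorm dB)" for dA dB
    unfolding l_def by (rule opnorm_add_mult_le)
  have "0 \<le> l" unfolding l_def by (simp add: opnorm_nonneg)
  then show ?thesis
    using order_trans[OF Lipschitz_in_closed_loop perturbation_bound] by blast
qed

end
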